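(* Let $\mathcal Q$ be a question space, $\mathcal A$ an answer space, $p_0$ a distribution on $\mathcal Q$, and let the reward be binary, $s:\mathcal Q\times\mathcal A\to\{0,1\}$ ($s=1$ meaning a correct answer), with acceptance of a pair $(q,a)$ meaning $s(q,a)=1$. Let $\Pi$ be a finite class of conditional answer distributions $\pi_\theta(\cdot\mid q)$. Run iterative self-improvement from an initial model $\hat\theta_0$: at each iteration $t=0,1,2,\dots$, sample $n$ questions $q\sim p_0$ i.i.d., generate one answer $a\sim\pi_{\hat\theta_t}(\cdot\mid q)$ per question, keep the $n_t\le n$ pairs with $s(q,a)=1$, and set $\hat\theta_{t+1}$ to be the empirical maximum likelihood estimator over $\Pi$ on the kept pairs, i.e. $\hat\theta_{t+1}=\arg\max_{\theta:\pi_\theta\in\Pi}\frac1{n_t}\sum_{i=1}^{n_t}\log\pi_\theta(a_i\mid q_i)$. Assume at every iteration the conditional answer distribution $a\mapsto\pi_{\hat\theta_t}(a\mid q)\mathbf 1_{\{s(q,a)=1\}}/\alpha(\hat\theta_t,q)$ belongs to $\Pi$, and that all models lie in a neighborhood $\Theta$ of the pretrained initialization for which the following holds: there exist constants $c\in(0,1)$ and $\gamma\ge 0$ such that for every question distribution $p$ and every $\theta\in\Theta$, \[ \Pr_{q\sim p}\big[\alpha(\theta,q)<c\,V_p(\theta)\big]\le\gamma. \] Let $\nu:=\sqrt{1/n}$, $c_\delta:=\sqrt{2\log(|\Pi|\delta^{-1})}$, $c_{\delta'}:=\sqrt{\log(\delta'^{-1})/2}$ for $\delta,\delta'\in(0,1)$,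 and define on its natural domain $x>c_{\delta'}\nu$ \[ F(x):=1-\gamma-\frac{c_\delta\,\nu}{c\sqrt{x-c_{\delta'}\nu}}. \] Then, with probability at least $1-\delta-\delta'$, $V_{p_0}(\hat\theta_{t+1})\ge F\big(V_{p_0}(\hat\theta_t)\big)$. Moreover, with probability at least $1-t(\delta+\delta')$, \[ V_{p_0}(\hat\theta_t)\ge F^{\circ t}\big(V_{p_0}(\hat\theta_0)\big), \] where $F^{\circ t}$ denotes the $t$-fold composition of $F$.
   Context: Per-question acceptance rate: $\alpha(\theta,q):=\Pr_{a\sim\pi_\theta(\cdot\mid q)}[s(q,a)=1]$, assumed positive. Expected reward: $V_p(\theta):=\mathbb E_{q\sim p,\,a\sim\pi_\theta(\cdot\mid q)}[s(q,a)]$. Probabilities are over the random sampling of questions and answers across iterations. *)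

theory Defs
  imports "HOL-Probability.Probability"
begin

text \<open>Models are identified with their conditional answer distributions
  \<pi> :: 'q \<Rightarrow> 'a pmf. The binary reward is the predicate s :: 'q \<Rightarrow> 'a \<Rightarrow> bool
  (s q a = True meaning reward 1).\<close>

definition acc_rate :: "('q \<Rightarrow> 'a \<Rightarrow> bool) \<Rightarrow> ('q \<Rightarrow> 'a pmf) \<Rightarrow> 'q \<Rightarrow> real" where
  "acc_rate s \<pi> q = measure_pmf.prob (\<pi> q) {a. s q a}"

definition exp_reward :: "('q \<Rightarrow> 'a \<Rightarrow> bool) \<Rightarrow> 'q pmf \<Rightarrow> ('q \<Rightarrow> 'a pmf) \<Rightarrow> real" where
  "exp_reward s p \<pi> = measure_pmf.expectation p (\<lambda>q. acc_rate s \<pi> q)"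

definition filtered :: "('q \<Rightarrow> 'a \<Rightarrow> bool) \<Rightarrow> ('q \<Rightarrow> 'a pmf) \<Rightarrow> ('q \<Rightarrow> 'a pmf)" where
  "filtered s \<pi> = (\<lambda>q. cond_pmf (\<pi> q) {a. s q a})"

fun iid_list :: "nat \<Rightarrow> 'x pmf \<Rightarrow> 'x list pmf" where
  "iid_list 0 p = return_pmf []"
| "iid_list (Suc n) p = bind_pmf p (\<lambda>x. bind_pmf (iid_list n p) (\<lambda>xs. return_pmf (x # xs)))"

definition pair_dist :: "'q pmf \<Rightarrow> ('q \<Rightarrow> 'a pmf) \<Rightarrow> ('q \<times> 'a) pmf" where
  "pair_dist p0 \<pi> = bind_pmf p0 (\<lambda>q. map_pmf (\<lambda>a. (q, a)) (\<pi> q))"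

definition eln :: "real \<Rightarrow> ereal" where
  "eln x = (if x > 0 then ereal (ln x) else -\<infinity>)"

definition avg_loglik :: "('q \<Rightarrow> 'a pmf) \<Rightarrow> ('q \<times> 'a) list \<Rightarrow> ereal" where
  "avg_loglik \<pi> D = ereal (1 / real (length D)) * sum_list (map (\<lambda>(q, a). eln (pmf (\<pi> q) a)) D)"

definition is_mle_selector :: "('q \<Rightarrow> 'a pmf) set \<Rightarrow> (('q \<times> 'a) list \<Rightarrow> ('q \<Rightarrow> 'a pmf)) \<Rightarrow> bool" where
  "is_mle_selector Mods mle \<longleftrightarrow>
     (\<forall>D. mle D \<in> Mods \<and> (\<forall>\<pi>\<in>Mods. avg_loglik \<pi> D \<le> avg_loglik (mle D) D))"

definition si_step :: "'q pmf \<Rightarrow> ('q \<Rightarrow> 'a \<Rightarrow> bool) \<Rightarrow> nat \<Rightarrow> (('q \<times> 'a) list \<Rightarrow> ('q \<Rightarrow> 'a pmf))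
    \<Rightarrow> ('q \<Rightarrow> 'a pmf) \<Rightarrow> ('q \<Rightarrow> 'a pmf) pmf" where
  "si_step p0 s n mle \<pi> =
     map_pmf (\<lambda>D. mle (filter (\<lambda>(q, a). s q a) D)) (iid_list n (pair_dist p0 \<pi>))"

fun si_iter :: "'q pmf \<Rightarrow> ('q \<Rightarrow> 'a \<Rightarrow> bool) \<Rightarrow> nat \<Rightarrow> (('q \<times> 'a) list \<Rightarrow> ('q \<Rightarrow> 'a pmf))
    \<Rightarrow> ('q \<Rightarrow> 'a pmf) \<Rightarrow> nat \<Rightarrow> ('q \<Rightarrow> 'a pmf) pmf" where
  "si_iter p0 s n mle \<pi>0 0 = return_pmf \<pi>0"
| "si_iter p0 s n mle \<pi>0 (Suc t) = bind_pmf (si_iter p0 s n mle \<pi>0 t) (si_step p0 s n mle)"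

definition reachable :: "'q pmf \<Rightarrow> ('q \<Rightarrow> 'a \<Rightarrow> bool) \<Rightarrow> nat \<Rightarrow> (('q \<times> 'a) list \<Rightarrow> ('q \<Rightarrow> 'a pmf))
    \<Rightarrow> ('q \<Rightarrow> 'a pmf) \<Rightarrow> ('q \<Rightarrow> 'a pmf) set" where
  "reachable p0 s n mle \<pi>0 = (\<Union>t. set_pmf (si_iter p0 s n mle \<pi>0 t))"

definition nu :: "nat \<Rightarrow> real" where "nu n = sqrt (1 / real n)"
definition c_delta :: "nat \<Rightarrow> real \<Rightarrow> real" where
  "c_delta N \<delta> = sqrt (2 * ln (real N / \<delta>))"
definition c_delta' :: "real \<Rightarrow> real" where
  "c_delta' \<delta>' = sqrt (ln (1 / \<delta>') / 2)"

definition F_map :: "real \<Rightarrow> real \<Rightarrow> real \<Rightarrow> real \<Rightarrow> real \<Rightarrow> real \<Rightarrow> real" where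
  "F_map c \<gamma> cd cd' \<nu> x = 1 - \<gamma> - cd * \<nu> / (c * sqrt (x - cd' * \<nu>))"

end

theory Submission
  imports Defs
begin

(*
  Fix the current model pi and a competitor pi' in the class, and let
  K(pi, pi') = E_q [alpha(pi, q) (1 - alpha(pi', q))].  The likelihood ratio of pi' against the
  filtered model on accepted pairs, extended by 1 on rejected pairs, has mean at most 1 - K
  under the sampling distribution, so by Markov's inequality its product over n i.i.d. pairs
  reaches 1 with probability at most (1 - K)^n <= exp (- n K).  Since the filtered model lies
  in the class, the product for the MLE is at least 1; a union bound over the class yields
  K(pi, MLE) <= ln (|Pi| / delta) / n with probability at least 1 - delta.  Anti-concentration
  turns this into V(MLE) >= 1 - gamma - K / (c V(pi)), which dominates F(V(pi)).  Monotonicity of F and a union bound over the iterations give the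
  second claim.
*)

lemma set_pmf_iid_list:
  "xs \<in> set_pmf (iid_list n P) \<Longrightarrow> length xs = n \<and> (\<forall>x\<in>set xs. x \<in> set_pmf P)"
  by (induction n arbitrary: xs) auto

lemma nn_integral_prod_list_iid_list:
  assumes "\<And>x. r x \<ge> 0"
  shows "(\<integral>\<^sup>+xs. ennreal (prod_list (map r xs)) \<partial>iid_list n P) = (\<integral>\<^sup>+x. ennreal (r x) \<partial>P) ^ n"
proof (induction n)
  case 0
  then show ?case by simp
next
  case (Suc n)
  have "\<And>xs. prod_list (map r xs) \<ge> 0"
    by (rule prod_list_nonneg) (auto simp: assms)
  then have "(\<integral>\<^sup>+xs. ennreal (prod_list (map r xs)) \<partial>iid_list (Suc n) P)
      = (\<integral>\<^sup>+x. ennreal (r x) * (\<integral>\<^sup>+xs. ennreal (prod_list (map r xs)) \<partial>iid_list n P) \<partial>P)"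
    using assms by (simp add: ennreal_mult nn_integral_cmult)
  then show ?case
    by (simp add: Suc nn_integral_multc)
qed

lemma prob_prod_list_ge_1_iid_list:
  fixes P :: "'x pmf"
  assumes "\<And>x. r x \<ge> 0" and "(\<integral>\<^sup>+x. ennreal (r x) \<partial>P) \<le> ennreal b" and "b \<ge> 0"
  shows "measure_pmf.prob (iid_list n P) {xs. 1 \<le> prod_list (map r xs)} \<le> b ^ n"
proof -
  have "emeasure (iid_list n P) {xs. 1 \<le> prod_list (map r xs)}
      = (\<integral>\<^sup>+xs. indicator {xs. 1 \<le> prod_list (map r xs)} xs \<partial>iid_list n P)"
    by simp
  also have "\<dots> \<le> (\<integral>\<^sup>+xs. ennreal (prod_list (map r xs)) \<partial>iid_list n P)"
    by (intro nn_integral_mono) (auto split: split_indicator)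
  also have "\<dots> \<le> ennreal b ^ n"
    using assms by (simp add: nn_integral_prod_list_iid_list power_mono)
  also have "\<dots> = ennreal (b ^ n)"
    using assms by (simp add: ennreal_power)
  finally show ?thesis
    using assms by (simp add: measure_pmf.emeasure_eq_measure ennreal_le_iff)
qed

lemma measure_bind_pmf:
  "measure_pmf.prob (bind_pmf M N) X = measure_pmf.expectation M (\<lambda>x. measure_pmf.prob (N x) X)"
  unfolding measure_pmf_bind
  by (rule measure_pmf.measure_bind[where N="count_space UNIV"])
     (auto simp: measurable_pmf_measure1 space_subprob_algebra subprob_space_measure_pmf)

lemma measure_bind_pmf_ge:
  assumes "\<And>x. x \<in> set_pmf M \<Longrightarrow> x \<in> A \<Longrightarrow> measure_pmf.prob (N x) B \<ge> 1 - \<epsilon>" and "\<epsilon> \<ge> 0"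
  shows "measure_pmf.prob (bind_pmf M N) B \<ge> measure_pmf.prob M A - \<epsilon>"
proof -
  have int: "integrable M (indicator A :: _ \<Rightarrow> real)" "integrable M (\<lambda>x. measure_pmf.prob (N x) B)"
    by (auto intro!: measure_pmf.integrable_const_bound[where B=1] split: split_indicator)
  have "indicator A x - \<epsilon> \<le> measure_pmf.prob (N x) B" if "x \<in> set_pmf M" for x
  proof (cases "x \<in> A")
    case True
    then show ?thesis
      using assms(1) that by simp
  next
    case False
    have "0 \<le> measure_pmf.prob (N x) B"
      by (rule measure_nonneg)
    moreover have "indicator A x = (0 :: real)"
      using False by simp
    ultimately show ?thesis
      using assms(2) by linarith
  qed
  then have "measure_pmf.expectation M (\<lambda>x. indicator A x - \<epsilon>)
      \<le> measure_pmf.expectation M (\<lambda>x. measure_pmf.prob (N x) B)"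
    using int by (intro integral_mono_AE) (auto simp: AE_measure_pmf_iff)
  then show ?thesis
    using int by (simp add: measure_bind_pmf)
qed

lemma acc_rate_nonneg: "0 \<le> acc_rate s \<pi> q"
  and acc_rate_le_1: "acc_rate s \<pi> q \<le> 1"
  by (auto simp: acc_rate_def)

lemma exp_reward_nonneg: "0 \<le> exp_reward s p \<pi>"
  unfolding exp_reward_def by (intro integral_nonneg_AE) (simp add: acc_rate_nonneg)

lemma pmf_filtered:
  assumes "acc_rate s \<pi> q > 0"
  shows "pmf (filtered s \<pi> q) a = (if s q a then pmf (\<pi> q) a / acc_rate s \<pi> q else 0)"
proof -
  have "set_pmf (\<pi> q) \<inter> {a. s q a} \<noteq> {}"
    using assms measure_pmf_zero_iff[of "\<pi> q" "{a. s q a}"] by (auto simp: acc_rate_def)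
  then show ?thesis
    unfolding filtered_def by (simp add: pmf_cond acc_rate_def)
qed

definition likelihood :: "('q \<Rightarrow> 'a pmf) \<Rightarrow> ('q \<times> 'a) list \<Rightarrow> real" where
  "likelihood \<pi> D = prod_list (map (\<lambda>(q, a). pmf (\<pi> q) a) D)"

lemma eln_mult: "0 \<le> x \<Longrightarrow> 0 \<le> y \<Longrightarrow> eln (x * y) = eln x + eln y"
  by (auto simp: eln_def ln_mult zero_less_mult_iff)

lemma eln_le_eln_imp_le: "0 < x \<Longrightarrow> eln x \<le> eln y \<Longrightarrow> x \<le> y"
  by (auto simp: eln_def split: if_splits)

lemma sum_list_eln:
  "(\<And>x. x \<in> set D \<Longrightarrow> 0 \<le> f x) \<Longrightarrow> sum_list (map (\<lambda>x. eln (f x)) D) = eln (prod_list (map f D))"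
proof (induction D)
  case Nil
  then show ?case by (simp add: eln_def)
next
  case (Cons x D)
  then have "0 \<le> prod_list (map f D)"
    by (intro prod_list_nonneg) auto
  with Cons show ?case
    by (simp add: eln_mult)
qed

lemma avg_loglik_likelihood: "avg_loglik \<pi> D = ereal (1 / real (length D)) * eln (likelihood \<pi> D)"
  unfolding avg_loglik_def likelihood_def
  by (subst sum_list_eln[symmetric]) (auto simp: case_prod_unfold)

lemma likelihood_le_mle:
  assumes "is_mle_selector Mods mle" and "\<pi> \<in> Mods" and "likelihood \<pi> D > 0"
  shows "likelihood \<pi> D \<le> likelihood (mle D) D"
proof (cases "D = []")
  case True
  then show ?thesis by (simp add: likelihood_def)
next
  case False
  have "avg_loglik \<pi> D \<le> avg_loglik (mle D) D"
    using assms by (simp add: is_mle_selector_def)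
  then have "eln (likelihood \<pi> D) \<le> eln (likelihood (mle D) D)"
    using False by (simp add: avg_loglik_likelihood ereal_mult_le_mult_iff)
  then show ?thesis
    using assms(3) eln_le_eln_imp_le by blast
qed

definition lik_ratio :: "('q \<Rightarrow> 'a \<Rightarrow> bool) \<Rightarrow> ('q \<Rightarrow> 'a pmf) \<Rightarrow> ('q \<Rightarrow> 'a pmf) \<Rightarrow> 'q \<times> 'a \<Rightarrow> real" where
  "lik_ratio s \<pi> \<pi>' = (\<lambda>(q, a). if s q a then pmf (\<pi>' q) a / pmf (filtered s \<pi> q) a else 1)"

definition acc_rej_prob :: "'q pmf \<Rightarrow> ('q \<Rightarrow> 'a \<Rightarrow> bool) \<Rightarrow> ('q \<Rightarrow> 'a pmf) \<Rightarrow> ('q \<Rightarrow> 'a pmf) \<Rightarrow> real" where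
  "acc_rej_prob p s \<pi> \<pi>' = measure_pmf.expectation p (\<lambda>q. acc_rate s \<pi> q * (1 - acc_rate s \<pi>' q))"

lemma lik_ratio_nonneg: "0 \<le> lik_ratio s \<pi> \<pi>' x"
  by (auto simp: lik_ratio_def split: prod.splits)

lemma prod_list_lik_ratio:
  "prod_list (map (lik_ratio s \<pi> \<pi>') xs)
     = likelihood \<pi>' (filter (\<lambda>(q, a). s q a) xs) / likelihood (filtered s \<pi>) (filter (\<lambda>(q, a). s q a) xs)"
  by (induction xs) (auto simp: lik_ratio_def likelihood_def)

lemma likelihood_filtered_pos:
  assumes "\<forall>q. acc_rate s \<pi> q > 0" and "set xs \<subseteq> set_pmf (pair_dist p \<pi>)"
  shows "likelihood (filtered s \<pi>) (filter (\<lambda>(q, a). s q a) xs) > 0"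
  using assms(2)
proof (induction xs)
  case Nil
  then show ?case by (simp add: likelihood_def)
next
  case (Cons x xs)
  obtain q a where x: "x = (q, a)" by fastforce
  have "0 < pmf (\<pi> q) a"
    using Cons.prems by (auto simp: x pair_dist_def pmf_positive)
  with Cons show ?case
    using assms(1) by (auto simp: x likelihood_def pmf_filtered)
qed

lemma prod_list_lik_ratio_mle:
  assumes "is_mle_selector Mods mle" and "\<forall>q. acc_rate s \<pi> q > 0" and "filtered s \<pi> \<in> Mods"
    and "set xs \<subseteq> set_pmf (pair_dist p \<pi>)"
  shows "1 \<le> prod_list (map (lik_ratio s \<pi> (mle (filter (\<lambda>(q, a). s q a) xs))) xs)"
proof -
  let ?D = "filter (\<lambda>(q, a). s q a) xs"
  have "0 < likelihood (filtered s \<pi>) ?D"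
    using assms(2,4) by (rule likelihood_filtered_pos)
  moreover from this have "likelihood (filtered s \<pi>) ?D \<le> likelihood (mle ?D) ?D"
    using assms(1,3) likelihood_le_mle by blast
  ultimately show ?thesis
    by (simp add: prod_list_lik_ratio)
qed

lemma acc_rate_mult_compl_bounds:
  "0 \<le> acc_rate s \<pi> q * (1 - acc_rate s \<pi>' q)" "acc_rate s \<pi> q * (1 - acc_rate s \<pi>' q) \<le> 1"
  using acc_rate_nonneg[of s \<pi> q] acc_rate_le_1[of s \<pi> q] acc_rate_nonneg[of s \<pi>' q] acc_rate_le_1[of s \<pi>' q]
  by (auto simp: mult_le_one)

lemma integrable_acc_rate_mult_compl: "integrable (measure_pmf p) (\<lambda>q. acc_rate s \<pi> q * (1 - acc_rate s \<pi>' q))"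
  using acc_rate_mult_compl_bounds[of s \<pi> _ \<pi>'] by (intro measure_pmf.integrable_const_bound[where B=1]) auto

lemma acc_rej_prob_le_1: "acc_rej_prob p s \<pi> \<pi>' \<le> 1"
proof -
  have "acc_rej_prob p s \<pi> \<pi>' \<le> measure_pmf.expectation p (\<lambda>q. 1)"
    unfolding acc_rej_prob_def
    using acc_rate_mult_compl_bounds(2)[of s \<pi> _ \<pi>'] integrable_acc_rate_mult_compl by (intro integral_mono) auto
  then show ?thesis
    by simp
qed

lemma nn_integral_lik_ratio_cond:
  assumes pos: "acc_rate s \<pi> q > 0"
  shows "(\<integral>\<^sup>+a. lik_ratio s \<pi> \<pi>' (q, a) \<partial>\<pi> q) \<le> ennreal (1 - acc_rate s \<pi> q * (1 - acc_rate s \<pi>' q))"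
proof -
  let ?\<alpha> = "acc_rate s \<pi> q" and ?\<beta> = "acc_rate s \<pi>' q"
  have "ennreal (pmf (\<pi> q) a) * lik_ratio s \<pi> \<pi>' (q, a)
      \<le> ennreal (pmf (\<pi> q) a) * indicator {a. \<not> s q a} a
        + ennreal ?\<alpha> * (ennreal (pmf (\<pi>' q) a) * indicator {a. s q a} a)" for a
  proof (cases "s q a \<and> pmf (\<pi> q) a > 0")
    case True
    then have "pmf (\<pi> q) a * lik_ratio s \<pi> \<pi>' (q, a) = ?\<alpha> * pmf (\<pi>' q) a"
      using pos by (simp add: lik_ratio_def pmf_filtered)
    then show ?thesis
      using True pos by (simp add: ennreal_mult[symmetric] lik_ratio_nonneg)
  next
    case False
    then have "\<not> s q a \<or> pmf (\<pi> q) a = 0"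
      using pmf_nonneg[of "\<pi> q" a] by linarith
    then show ?thesis
      by (auto simp: lik_ratio_def)
  qed
  then have "(\<integral>\<^sup>+a. lik_ratio s \<pi> \<pi>' (q, a) \<partial>\<pi> q)
      \<le> (\<integral>\<^sup>+a. ennreal (pmf (\<pi> q) a) * indicator {a. \<not> s q a} a
             + ennreal ?\<alpha> * (ennreal (pmf (\<pi>' q) a) * indicator {a. s q a} a) \<partial>count_space UNIV)"
    unfolding nn_integral_measure_pmf by (intro nn_integral_mono)
  also have "\<dots> = emeasure (\<pi> q) {a. \<not> s q a} + ennreal ?\<alpha> * emeasure (\<pi>' q) {a. s q a}"
    by (simp add: nn_integral_add nn_integral_cmult nn_integral_measure_pmf[symmetric] mult.commute)
  also have "\<dots> = ennreal (1 - ?\<alpha>) + ennreal ?\<alpha> * ennreal ?\<beta>"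
    using measure_pmf.prob_compl[of "{a. s q a}" "\<pi> q"]
    by (simp add: measure_pmf.emeasure_eq_measure acc_rate_def Compl_eq_Diff_UNIV[symmetric] Collect_neg_eq)
  also have "\<dots> = ennreal (1 - ?\<alpha> * (1 - ?\<beta>))"
    using acc_rate_nonneg[of s] acc_rate_le_1[of s]
    by (simp add: ennreal_mult[symmetric] ennreal_plus[symmetric] algebra_simps del: ennreal_plus)
  finally show ?thesis .
qed

lemma nn_integral_lik_ratio:
  assumes "\<forall>q. acc_rate s \<pi> q > 0"
  shows "(\<integral>\<^sup>+x. lik_ratio s \<pi> \<pi>' x \<partial>pair_dist p \<pi>) \<le> ennreal (1 - acc_rej_prob p s \<pi> \<pi>')"
proof -
  have "(\<integral>\<^sup>+x. lik_ratio s \<pi> \<pi>' x \<partial>pair_dist p \<pi>) = (\<integral>\<^sup>+q. \<integral>\<^sup>+a. lik_ratio s \<pi> \<pi>' (q, a) \<partial>\<pi> q \<partial>p)"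
    by (simp add: pair_dist_def)
  also have "\<dots> \<le> (\<integral>\<^sup>+q. ennreal (1 - acc_rate s \<pi> q * (1 - acc_rate s \<pi>' q)) \<partial>p)"
    using assms by (intro nn_integral_mono nn_integral_lik_ratio_cond) auto
  also have "\<dots> = ennreal (1 - acc_rej_prob p s \<pi> \<pi>')"
    using acc_rate_mult_compl_bounds[of s \<pi> _ \<pi>'] integrable_acc_rate_mult_compl[of p s \<pi> \<pi>']
    by (subst nn_integral_eq_integral) (auto simp: acc_rej_prob_def)
  finally show ?thesis .
qed

lemma exp_reward_ge_acc_rej_prob:
  assumes V: "exp_reward s p \<pi> > 0" and c: "c > 0"
    and anti: "measure_pmf.prob p {q. acc_rate s \<pi> q < c * exp_reward s p \<pi>} \<le> \<gamma>"
  shows "1 - \<gamma> - acc_rej_prob p s \<pi> \<pi>' / (c * exp_reward s p \<pi>) \<le> exp_reward s p \<pi>'"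
proof -
  define B where "B = {q. acc_rate s \<pi> q < c * exp_reward s p \<pi>}"
  let ?\<alpha> = "acc_rate s \<pi>" and ?\<beta> = "acc_rate s \<pi>'" and ?cV = "c * exp_reward s p \<pi>"
  have cV: "?cV > 0"
    using V c by simp
  have "1 - ?\<beta> q \<le> indicator B q + ?\<alpha> q * (1 - ?\<beta> q) / ?cV" for q
  proof (cases "q \<in> B")
    case True
    have "0 \<le> ?\<alpha> q * (1 - ?\<beta> q) / ?cV"
      using acc_rate_mult_compl_bounds(1)[of s \<pi> q \<pi>'] cV by simp
    then show ?thesis
      using True acc_rate_nonneg[of s \<pi>' q] by simp
  next
    case False
    then have "?cV * (1 - ?\<beta> q) \<le> ?\<alpha> q * (1 - ?\<beta> q)"
      using acc_rate_le_1[of s \<pi>' q] by (intro mult_right_mono) (auto simp: B_def)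
    then show ?thesis
      using False cV by (simp add: le_divide_eq mult.commute)
  qed
  moreover have "integrable p ?\<beta>" "integrable p (indicator B :: 'a \<Rightarrow> real)"
    using acc_rate_nonneg[of s \<pi>'] acc_rate_le_1[of s \<pi>']
    by (auto intro!: measure_pmf.integrable_const_bound[where B=1] split: split_indicator)
  ultimately have "measure_pmf.expectation p (\<lambda>q. 1 - ?\<beta> q)
      \<le> measure_pmf.expectation p (\<lambda>q. indicator B q + ?\<alpha> q * (1 - ?\<beta> q) / ?cV)"
    using integrable_acc_rate_mult_compl[of p s \<pi> \<pi>'] by (intro integral_mono) auto
  then have "1 - exp_reward s p \<pi>' \<le> measure_pmf.prob p B + acc_rej_prob p s \<pi> \<pi>' / ?cV"
    using \<open>integrable p ?\<beta>\<close> \<open>integrable p (indicator B)\<close> integrable_acc_rate_mult_compl[of p s \<pi> \<pi>']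
    by (simp add: exp_reward_def acc_rej_prob_def)
  then show ?thesis
    using anti unfolding B_def by linarith
qed

lemma F_map_le_max:
  assumes "0 \<le> L" "0 < m" "0 \<le> cd'" "cd' * sqrt (1 / m) < V" "0 < c" "c \<le> 1" "0 \<le> \<gamma>"
  shows "F_map c \<gamma> (sqrt (2 * L)) cd' (sqrt (1 / m)) V \<le> max 0 (1 - \<gamma> - L / (m * c * V))"
proof -
  define e where "e = cd' * sqrt (1 / m)"
  define w where "w = L / (m * V)"
  define T where "T = sqrt (2 * L) * sqrt (1 / m) / (c * sqrt (V - e))"
  have e: "0 \<le> e" "e < V"
    using assms by (auto simp: e_def)
  have w: "0 \<le> w" "L / (m * c * V) = w / c"
    using assms e by (auto simp: w_def)
  have "sqrt (2 * L) * sqrt (1 / m) = sqrt (2 * w) * sqrt V"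
    using assms e by (simp add: w_def real_sqrt_mult[symmetric] field_simps)
  moreover have "sqrt (2 * w) * sqrt (V - e) \<le> sqrt (2 * w) * sqrt V" "0 < sqrt (V - e)"
    using e w by (auto intro: mult_left_mono)
  ultimately have "sqrt (2 * w) \<le> sqrt (2 * L) * sqrt (1 / m) / sqrt (V - e)"
    by (simp add: le_divide_eq)
  then have "sqrt (2 * w) / c \<le> sqrt (2 * L) * sqrt (1 / m) / sqrt (V - e) / c"
    using assms(5) by (intro divide_right_mono) auto
  then have T: "sqrt (2 * w) / c \<le> T"
    unfolding T_def by (simp add: mult.commute)
  txt \<open>For w \<le> 2 we have w \<le> sqrt (2 w); otherwise F is negative.\<close>
  show ?thesis
  proof (cases "w \<le> 2")
    case True
    then have "w \<le> sqrt (2 * w)"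
      using w by (simp add: real_le_rsqrt power2_eq_square mult_right_mono)
    then have "w / c \<le> T"
      using T assms(5) by (meson divide_right_mono less_imp_le order_trans)
    then show ?thesis
      by (simp add: F_map_def T_def e_def w)
  next
    case False
    then have "2 < sqrt (2 * w)"
      using real_less_rsqrt[of 2 "2 * w"] by simp
    then have "2 / c < sqrt (2 * w) / c"
      using assms(5) by (simp add: divide_strict_right_mono)
    moreover have "1 \<le> 2 / c"
      using assms(5,6) by (simp add: le_divide_eq)
    ultimately have "1 < T"
      using T by linarith
    then show ?thesis
      using assms(7) by (simp add: F_map_def T_def e_def)
  qed
qed

lemma is_mle_selector_card_ge_1:
  assumes "finite Mods" and "is_mle_selector Mods mle"
  shows "1 \<le> card Mods"
proof -
  have "mle [] \<in> Mods"
    using assms(2) by (simp add: is_mle_selector_def)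
  then show ?thesis
    using assms(1) by (metis One_nat_def Suc_leI card_gt_0_iff empty_iff)
qed

lemma prob_si_step_acc_rej_prob_gt:
  assumes fin: "finite Mods" and mle: "is_mle_selector Mods mle"
    and pos: "\<forall>q. acc_rate s \<pi> q > 0" and mods: "filtered s \<pi> \<in> Mods"
  shows "measure_pmf.prob (si_step p s n mle \<pi>) {\<pi>'. \<epsilon> < acc_rej_prob p s \<pi> \<pi>'}
           \<le> real (card Mods) * exp (- real n * \<epsilon>)"
proof -
  let ?P = "iid_list n (pair_dist p \<pi>)"
  let ?mle = "\<lambda>xs. mle (filter (\<lambda>(q, a). s q a) xs)"
  let ?E = "\<lambda>\<pi>'. {xs. 1 \<le> prod_list (map (lik_ratio s \<pi> \<pi>') xs)}"
  define Bad where "Bad = {\<pi>' \<in> Mods. \<epsilon> < acc_rej_prob p s \<pi> \<pi>'}"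
  have "measure_pmf.prob ?P (?E \<pi>') \<le> exp (- real n * \<epsilon>)" if "\<pi>' \<in> Bad" for \<pi>'
  proof -
    let ?K = "acc_rej_prob p s \<pi> \<pi>'"
    have "measure_pmf.prob ?P (?E \<pi>') \<le> (1 - ?K) ^ n"
      using acc_rej_prob_le_1 nn_integral_lik_ratio[OF pos]
      by (intro prob_prod_list_ge_1_iid_list lik_ratio_nonneg) auto
    also have "\<dots> \<le> exp (- ?K) ^ n"
      using acc_rej_prob_le_1 exp_ge_add_one_self[of "- ?K"] by (intro power_mono) auto
    also have "\<dots> \<le> exp (- real n * \<epsilon>)"
      using that by (auto simp: Bad_def exp_of_nat_mult[symmetric] intro!: mult_left_mono)
    finally show ?thesis .
  qed
  then have "(\<Sum>\<pi>'\<in>Bad. measure_pmf.prob ?P (?E \<pi>')) \<le> real (card Bad) * exp (- real n * \<epsilon>)"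
    using sum_mono[of Bad _ "\<lambda>_. exp (- real n * \<epsilon>)"] by simp
  also have "\<dots> \<le> real (card Mods) * exp (- real n * \<epsilon>)"
    using card_mono[OF fin, of Bad] by (simp add: Bad_def)
  finally have sum: "(\<Sum>\<pi>'\<in>Bad. measure_pmf.prob ?P (?E \<pi>')) \<le> real (card Mods) * exp (- real n * \<epsilon>)" .
  have "?mle xs \<in> Bad \<and> xs \<in> ?E (?mle xs)"
    if "xs \<in> set_pmf ?P" "\<epsilon> < acc_rej_prob p s \<pi> (?mle xs)" for xs
  proof
    show "?mle xs \<in> Bad"
      using that(2) mle by (simp add: Bad_def is_mle_selector_def)
    have "set xs \<subseteq> set_pmf (pair_dist p \<pi>)"
      using set_pmf_iid_list[OF that(1)] by blast
    then show "xs \<in> ?E (?mle xs)"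
      using prod_list_lik_ratio_mle[OF mle pos mods] by simp
  qed
  then have "measure_pmf.prob ?P (?mle -` {\<pi>'. \<epsilon> < acc_rej_prob p s \<pi> \<pi>'})
      \<le> measure_pmf.prob ?P (\<Union>\<pi>'\<in>Bad. ?E \<pi>')"
    by (intro measure_pmf.finite_measure_mono_AE) (auto simp: AE_measure_pmf_iff)
  also have "\<dots> \<le> (\<Sum>\<pi>'\<in>Bad. measure_pmf.prob ?P (?E \<pi>'))"
    using fin by (intro measure_pmf.finite_measure_subadditive_finite) (auto simp: Bad_def)
  finally show ?thesis
    using sum by (simp add: si_step_def)
qed

lemma exp_reward_ge_F_map:
  fixes m :: real
  assumes m: "0 < m" and c: "0 < c" "c \<le> 1" and \<gamma>: "0 \<le> \<gamma>"
    and anti: "measure_pmf.prob p {q. acc_rate s \<pi> q < c * exp_reward s p \<pi>} \<le> \<gamma>"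
    and L: "0 \<le> L" and cd': "0 \<le> cd'" and V: "cd' * sqrt (1 / m) < exp_reward s p \<pi>"
    and K: "acc_rej_prob p s \<pi> \<pi>' \<le> L / m"
  shows "F_map c \<gamma> (sqrt (2 * L)) cd' (sqrt (1 / m)) (exp_reward s p \<pi>) \<le> exp_reward s p \<pi>'"
proof -
  define V where "V = exp_reward s p \<pi>"
  have "0 \<le> cd' * sqrt (1 / m)"
    using cd' m by simp
  then have V_pos: "0 < V"
    using V by (simp add: V_def)
  have "acc_rej_prob p s \<pi> \<pi>' / (c * V) \<le> L / m / (c * V)"
    using K c V_pos by (intro divide_right_mono) auto
  then have "1 - \<gamma> - L / (m * c * V) \<le> 1 - \<gamma> - acc_rej_prob p s \<pi> \<pi>' / (c * V)"
    by (simp add: mult.assoc)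
  also have "\<dots> \<le> exp_reward s p \<pi>'"
    using exp_reward_ge_acc_rej_prob[OF _ c(1) anti] V_pos by (simp add: V_def)
  finally have bound: "1 - \<gamma> - L / (m * c * V) \<le> exp_reward s p \<pi>'" .
  have "F_map c \<gamma> (sqrt (2 * L)) cd' (sqrt (1 / m)) V \<le> max 0 (1 - \<gamma> - L / (m * c * V))"
    using F_map_le_max[OF L m cd' _ c \<gamma>] V by (simp add: V_def)
  also have "\<dots> \<le> exp_reward s p \<pi>'"
    using bound exp_reward_nonneg by simp
  finally show ?thesis
    by (simp add: V_def)
qed

lemma prob_si_step_exp_reward_ge_F_map:
  assumes fin: "finite Mods" and mle: "is_mle_selector Mods mle"
    and pos: "\<forall>q. acc_rate s \<pi> q > 0" and mods: "filtered s \<pi> \<in> Mods"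
    and n: "0 < n" and c: "0 < c" "c \<le> 1" and \<gamma>: "0 \<le> \<gamma>"
    and anti: "measure_pmf.prob p {q. acc_rate s \<pi> q < c * exp_reward s p \<pi>} \<le> \<gamma>"
    and \<delta>: "0 < \<delta>" "\<delta> \<le> 1" and cd': "0 \<le> cd'"
    and V: "cd' * nu n < exp_reward s p \<pi>"
  shows "1 - \<delta> \<le> measure_pmf.prob (si_step p s n mle \<pi>)
           {\<pi>'. F_map c \<gamma> (c_delta (card Mods) \<delta>) cd' (nu n) (exp_reward s p \<pi>) \<le> exp_reward s p \<pi>'}"
    (is "_ \<le> measure_pmf.prob ?M ?good")
proof -
  define L where "L = ln (real (card Mods) / \<delta>)"
  let ?bad = "{\<pi>'. L / real n < acc_rej_prob p s \<pi> \<pi>'}"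
  have card: "1 \<le> card Mods"
    using fin mle by (rule is_mle_selector_card_ge_1)
  then have "1 \<le> real (card Mods) / \<delta>"
    using \<delta> by simp
  then have L: "0 \<le> L" and "exp (- real n * (L / real n)) = \<delta> / real (card Mods)"
    using n by (simp_all add: L_def exp_minus)
  then have "measure_pmf.prob ?M ?bad \<le> \<delta>"
    using prob_si_step_acc_rej_prob_gt[OF fin mle pos mods, where \<epsilon> = "L / real n" and p = p and n = n] card by simp
  moreover have "UNIV - ?bad \<subseteq> ?good"
    using exp_reward_ge_F_map[OF _ c \<gamma> anti L cd', of "real n"] n V
    by (auto simp: c_delta_def nu_def L_def)
  then have "measure_pmf.prob ?M (UNIV - ?bad) \<le> measure_pmf.prob ?M ?good"
    by (intro measure_pmf.finite_measure_mono) auto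
  ultimately show ?thesis
    using measure_pmf.prob_compl[of ?bad ?M] by simp
qed

lemma F_map_mono:
  assumes "0 \<le> cd * \<nu>" "0 < c" "cd' * \<nu> < y" "y \<le> x"
  shows "F_map c \<gamma> cd cd' \<nu> y \<le> F_map c \<gamma> cd cd' \<nu> x"
proof -
  have "cd * \<nu> / (c * sqrt (x - cd' * \<nu>)) \<le> cd * \<nu> / (c * sqrt (y - cd' * \<nu>))"
    using assms by (intro divide_left_mono mult_left_mono mult_pos_pos) auto
  then show ?thesis
    unfolding F_map_def by linarith
qed

lemma prob_si_iter_ge_funpow:
  fixes V :: "('q \<Rightarrow> 'a pmf) \<Rightarrow> real"
  assumes step: "\<And>t \<theta>. \<theta> \<in> set_pmf (si_iter p s n mle \<theta>0 t) \<Longrightarrow> e < V \<theta> \<Longrightarrow>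
                  1 - \<epsilon> \<le> measure_pmf.prob (si_step p s n mle \<theta>) {\<theta>'. F (V \<theta>) \<le> V \<theta>'}"
    and mono: "\<And>x y. e < y \<Longrightarrow> y \<le> x \<Longrightarrow> F y \<le> F x" and \<epsilon>: "0 \<le> \<epsilon>"
    and above: "\<forall>k<t. e < (F ^^ k) (V \<theta>0)"
  shows "1 - real t * \<epsilon> \<le> measure_pmf.prob (si_iter p s n mle \<theta>0 t) {\<theta>. (F ^^ t) (V \<theta>0) \<le> V \<theta>}"
  using above
proof (induction t)
  case 0
  then show ?case by simp
next
  case (Suc t)
  let ?M = "si_iter p s n mle \<theta>0 t"
  have e: "e < (F ^^ t) (V \<theta>0)"
    using Suc.prems by simp
  have IH: "1 - real t * \<epsilon> \<le> measure_pmf.prob ?M {\<theta>. (F ^^ t) (V \<theta>0) \<le> V \<theta>}"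
    using Suc.IH Suc.prems by simp
  have "1 - real (Suc t) * \<epsilon> \<le> measure_pmf.prob ?M {\<theta>. (F ^^ t) (V \<theta>0) \<le> V \<theta>} - \<epsilon>"
    using IH by (simp add: algebra_simps)
  also have "\<dots> \<le> measure_pmf.prob (bind_pmf ?M (si_step p s n mle)) {\<theta>. (F ^^ Suc t) (V \<theta>0) \<le> V \<theta>}"
  proof (rule measure_bind_pmf_ge[OF _ \<epsilon>])
    fix \<theta> assume \<theta>: "\<theta> \<in> set_pmf ?M" "\<theta> \<in> {\<theta>. (F ^^ t) (V \<theta>0) \<le> V \<theta>}"
    then have "(F ^^ t) (V \<theta>0) \<le> V \<theta>"
      by simp
    then have "F ((F ^^ t) (V \<theta>0)) \<le> F (V \<theta>)" and "e < V \<theta>"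
      using e by (auto intro: mono)
    then have "measure_pmf.prob (si_step p s n mle \<theta>) {\<theta>'. F (V \<theta>) \<le> V \<theta>'}
        \<le> measure_pmf.prob (si_step p s n mle \<theta>) {\<theta>'. (F ^^ Suc t) (V \<theta>0) \<le> V \<theta>'}"
      by (intro measure_pmf.finite_measure_mono) auto
    moreover have "1 - \<epsilon> \<le> measure_pmf.prob (si_step p s n mle \<theta>) {\<theta>'. F (V \<theta>) \<le> V \<theta>'}"
      using step[OF \<theta>(1) \<open>e < V \<theta>\<close>] .
    ultimately show "1 - \<epsilon> \<le> measure_pmf.prob (si_step p s n mle \<theta>) {\<theta>'. (F ^^ Suc t) (V \<theta>0) \<le> V \<theta>'}"
      by linarith
  qed
  finally show ?case
    by (simp only: si_iter.simps)
qed

theorem corollary4p4: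
  fixes p0 :: "'q pmf"
    and s :: "'q \<Rightarrow> 'a \<Rightarrow> bool"
    and Mods :: "('q \<Rightarrow> 'a pmf) set"
    and Theta :: "('q \<Rightarrow> 'a pmf) set"
    and mle :: "('q \<times> 'a) list \<Rightarrow> ('q \<Rightarrow> 'a pmf)"
    and \<theta>0 :: "'q \<Rightarrow> 'a pmf"
    and n :: nat and c \<gamma> \<delta> \<delta>' :: real
  defines "R \<equiv> reachable p0 s n mle \<theta>0"
    and "F \<equiv> F_map c \<gamma> (c_delta (card Mods) \<delta>) (c_delta' \<delta>') (nu n)"
    and "V \<equiv> exp_reward s p0"
  assumes fin: "finite Mods"
    and n_pos: "n > 0"
    and mle: "is_mle_selector Mods mle"
    and alpha_pos: "\<forall>\<theta>\<in>R. \<forall>q. acc_rate s \<theta> q > 0"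
    and realizable: "\<forall>\<theta>\<in>R. filtered s \<theta> \<in> Mods"
    and in_Theta: "R \<subseteq> Theta"
    and c: "0 < c" "c < 1" and \<gamma>: "\<gamma> \<ge> 0"
    and anti_conc: "\<forall>p :: 'q pmf. \<forall>\<theta>\<in>Theta.
                      measure_pmf.prob p {q. acc_rate s \<theta> q < c * exp_reward s p \<theta>} \<le> \<gamma>"
    and \<delta>: "0 < \<delta>" "\<delta> < 1" and \<delta>': "0 < \<delta>'" "\<delta>' < 1"
  shows "(\<forall>t. \<forall>\<theta>\<in>set_pmf (si_iter p0 s n mle \<theta>0 t).
            V \<theta> > c_delta' \<delta>' * nu n \<longrightarrow>
            measure_pmf.prob (si_step p0 s n mle \<theta>) {\<theta>'. V \<theta>' \<ge> F (V \<theta>)} \<ge> 1 - \<delta> - \<delta>')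
       \<and> (\<forall>t. (\<forall>k<t. (F ^^ k) (V \<theta>0) > c_delta' \<delta>' * nu n) \<longrightarrow>
            measure_pmf.prob (si_iter p0 s n mle \<theta>0 t) {\<theta>. V \<theta> \<ge> (F ^^ t) (V \<theta>0)}
              \<ge> 1 - real t * (\<delta> + \<delta>'))"
proof -
  define e where "e = c_delta' \<delta>' * nu n"
  have in_R: "\<theta> \<in> R" if "\<theta> \<in> set_pmf (si_iter p0 s n mle \<theta>0 t)" for \<theta> t
    using that by (auto simp: R_def reachable_def)
  have cd': "0 \<le> c_delta' \<delta>'"
    using \<delta>' by (simp add: c_delta'_def)
  have step: "1 - (\<delta> + \<delta>') \<le> measure_pmf.prob (si_step p0 s n mle \<theta>) {\<theta>'. F (V \<theta>) \<le> V \<theta>'}"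
    if "\<theta> \<in> R" "e < V \<theta>" for \<theta>
  proof -
    have "\<theta> \<in> Theta"
      using that(1) in_Theta by blast
    then have "1 - \<delta> \<le> measure_pmf.prob (si_step p0 s n mle \<theta>) {\<theta>'. F (V \<theta>) \<le> V \<theta>'}"
      using that alpha_pos realizable anti_conc c \<gamma> \<delta> cd' n_pos unfolding F_def V_def e_def
      by (intro prob_si_step_exp_reward_ge_F_map[OF fin mle]) auto
    then show ?thesis
      using \<delta>' by linarith
  qed
  have "0 \<le> c_delta (card Mods) \<delta>"
    using is_mle_selector_card_ge_1[OF fin mle] \<delta> by (simp add: c_delta_def)
  then have mono: "F y \<le> F x" if "e < y" "y \<le> x" for x y
    using F_map_mono[OF _ c(1)] that by (simp add: F_def e_def nu_def)
  show ?thesis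
  proof (intro conjI allI ballI impI)
    fix t \<theta>
    assume "\<theta> \<in> set_pmf (si_iter p0 s n mle \<theta>0 t)" "c_delta' \<delta>' * nu n < V \<theta>"
    then show "1 - \<delta> - \<delta>' \<le> measure_pmf.prob (si_step p0 s n mle \<theta>) {\<theta>'. F (V \<theta>) \<le> V \<theta>'}"
      using step in_R by (simp add: e_def diff_diff_eq)
  next
    fix t
    assume "\<forall>k<t. c_delta' \<delta>' * nu n < (F ^^ k) (V \<theta>0)"
    then show "1 - real t * (\<delta> + \<delta>') \<le> measure_pmf.prob (si_iter p0 s n mle \<theta>0 t) {\<theta>. (F ^^ t) (V \<theta>0) \<le> V \<theta>}"
      using step in_R mono \<delta> \<delta>' by (intro prob_si_iter_ge_funpow[where e = e]) (auto simp: e_def)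
  qed
qed

end
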